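(* Let $\varphi:[0,\infty]\to[0,\infty]$ be a nonconstant continuous nondecreasing convex function such that $\int_{t_*}^{\infty}(t/\varphi(t))^{\alpha}dt<\infty$ for some $\alpha>0$ and some $t_*\in(t_0,\infty)$, where $t_0=\sup\{t:\varphi(t)=0\}$ ($t_0=0$ if $\varphi>0$ everywhere), and let $\tilde\alpha\in(\alpha,\infty)$. Then $\varphi=\psi\circ\tilde\varphi$ where $\psi,\tilde\varphi:[0,\infty]\to[0,\infty]$ are strictly convex, $\tilde\varphi\le\varphi$ on $[0,\infty]$, and $\int_{t_*}^{\infty}(t/\tilde\varphi(t))^{\tilde\alpha}dt<\infty$ for some $t_*>t_0$.
   Context: A function $g:[0,\infty]\to[0,\infty]$ is called strictly convex if it is nondecreasing, convex and $\lim_{t\to\infty}g(t)/t=\infty$. Continuity is in the topology of $[0,\infty]$. *)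

theory Defs
  imports "HOL-Analysis.Analysis"
begin

definition ennconvex :: "(ennreal \<Rightarrow> ennreal) \<Rightarrow> bool" where
  "ennconvex g \<longleftrightarrow> (\<forall>x y. \<forall>l::real. 0 \<le> l \<and> l \<le> 1 \<longrightarrow>
     g (ennreal l * x + ennreal (1 - l) * y) \<le> ennreal l * g x + ennreal (1 - l) * g y)"

definition strictly_convex_enn :: "(ennreal \<Rightarrow> ennreal) \<Rightarrow> bool" where
  "strictly_convex_enn g \<longleftrightarrow> mono g \<and> ennconvex g \<and>
     ((\<lambda>t::real. g (ennreal t) / ennreal t) \<longlongrightarrow> \<infinity>) at_top"

text \<open>t0 = sup{t : g t = 0}; Sup {} = 0 in ennreal.\<close>
definition zero_level :: "(ennreal \<Rightarrow> ennreal) \<Rightarrow> ennreal" where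
  "zero_level g = Sup {t. g t = 0}"

definition ratio_pow :: "(ennreal \<Rightarrow> ennreal) \<Rightarrow> real \<Rightarrow> real \<Rightarrow> ennreal" where
  "ratio_pow g a t = (if g (ennreal t) = 0 then \<infinity> else if g (ennreal t) = \<infinity> then 0
     else ennreal ((t / enn2real (g (ennreal t))) powr a))"

end

theory Submission
  imports Defs
begin

(*
  Let a be phi on the reals where it is finite and d its right derivative, and put
  theta = alpha / alpha'.  The inner function phi' is the primitive of d^theta (of d itself
  where d \<le> 1), and the outer function psi has slope d^(1-theta) at the point phi'(t), so
  that by the chain rule psi \<circ> phi' = phi.  Both factors are built as suprema of supporting
  affine functions, which makes monotonicity and convexity on [0,\<infinity>] automatic.  The
  integrability hypothesis forces d to be unbounded; this makes both factors superlinear and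
  phi infinite at \<infinity>, and comparing t / phi'(t) with (t/2) / phi(t/2) transfers the
  integrability from exponent alpha to alpha' = alpha / theta.
*)

lemma mono_on_integral_bounds:
  fixes f :: "real \<Rightarrow> real"
  assumes mono: "mono_on {x..y} f" and xy: "x \<le> y"
  shows "(y - x) * f x \<le> integral {x..y} f" and "integral {x..y} f \<le> (y - x) * f y"
proof -
  have int: "f integrable_on {x..y}" by (rule integrable_on_mono_on[OF mono])
  have "integral {x..y} (\<lambda>_. f x) \<le> integral {x..y} f"
    using mono by (intro integral_le[OF _ int]) (auto simp: mono_on_def)
  then show "(y - x) * f x \<le> integral {x..y} f" using xy by (simp add: content_real)
  have "integral {x..y} f \<le> integral {x..y} (\<lambda>_. f y)"
    using mono by (intro integral_le[OF int]) (auto simp: mono_on_def)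
  then show "integral {x..y} f \<le> (y - x) * f y" using xy by (simp add: content_real)
qed

text \<open>Integrating the increment f (s + \<delta>) - f s over [p, q] telescopes to the
  difference of the integrals over the two end windows of width \<delta>; for monotone f this
  is bounded by \<delta> times increments of f between the window endpoints.\<close>

lemma integral_increment_bounds:
  fixes f :: "real \<Rightarrow> real"
  assumes mono: "mono_on {p..q + \<delta>} f" and pq: "p \<le> q" and \<delta>: "0 \<le> \<delta>"
  shows "(\<lambda>s. f (s + \<delta>) - f s) integrable_on {p..q}"
    and "\<delta> * (f q - f (p + \<delta>)) \<le> integral {p..q} (\<lambda>s. f (s + \<delta>) - f s)"
    and "integral {p..q} (\<lambda>s. f (s + \<delta>) - f s) \<le> \<delta> * (f (q + \<delta>) - f p)"
proof -
  have mono_sub: "mono_on {x..y} f" if "p \<le> x" "y \<le> q + \<delta>" for x y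
    using mono_on_subset[OF mono] that by auto
  have int: "f integrable_on {x..y}" if "p \<le> x" "y \<le> q + \<delta>" for x y
    by (rule integrable_on_mono_on[OF mono_sub[OF that]])
  have shifted: "integral {p..q} (\<lambda>s. f (s + \<delta>)) = integral {p + \<delta>..q + \<delta>} f"
    using integral_shift_Icc_real[of p q f \<delta>] by (simp add: o_def add.commute)
  have shifted_int: "(\<lambda>s. f (s + \<delta>)) integrable_on {p..q}"
    using integrable_on_shift_Icc_real[of f \<delta> p q] int[of "p + \<delta>" "q + \<delta>"] \<delta>
    by (simp add: o_def add.commute)
  show "(\<lambda>s. f (s + \<delta>) - f s) integrable_on {p..q}"
    using integrable_diff[OF shifted_int int[of p q]] pq \<delta> by simp
  have "integral {p..q} (\<lambda>s. f (s + \<delta>) - f s) = integral {p + \<delta>..q + \<delta>} f - integral {p..q} f"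
    using integral_diff[OF shifted_int int[of p q]] pq \<delta> by (simp add: shifted)
  also have "\<dots> = integral {q..q + \<delta>} f - integral {p..p + \<delta>} f"
  proof -
    have "integral {p..p + \<delta>} f + integral {p + \<delta>..q + \<delta>} f = integral {p..q + \<delta>} f"
      using pq \<delta> by (intro Henstock_Kurzweil_Integration.integral_combine int) auto
    moreover have "integral {p..q} f + integral {q..q + \<delta>} f = integral {p..q + \<delta>} f"
      using pq \<delta> by (intro Henstock_Kurzweil_Integration.integral_combine int) auto
    ultimately show ?thesis by linarith
  qed
  finally have eq: "integral {p..q} (\<lambda>s. f (s + \<delta>) - f s)
      = integral {q..q + \<delta>} f - integral {p..p + \<delta>} f" .
  note window = mono_on_integral_bounds[OF mono_sub, simplified]
  show "\<delta> * (f q - f (p + \<delta>)) \<le> integral {p..q} (\<lambda>s. f (s + \<delta>) - f s)"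
    using window(1)[of q "q + \<delta>"] window(2)[of p "p + \<delta>"] pq \<delta> unfolding eq
    by (simp add: right_diff_distrib)
  show "integral {p..q} (\<lambda>s. f (s + \<delta>) - f s) \<le> \<delta> * (f (q + \<delta>) - f p)"
    using window(2)[of q "q + \<delta>"] window(1)[of p "p + \<delta>"] pq \<delta> unfolding eq
    by (simp add: right_diff_distrib)
qed

text \<open>A nondecreasing convex real function a on an open, downward closed set S containing 0.
  This is the real part of the function on [0,\<infinity>] considered later, restricted to where it
  is finite (and extended to the negative reals by its value at 0).\<close>

locale nondecr_convex =
  fixes a :: "real \<Rightarrow> real" and S :: "real set"
  assumes open_S: "open S"
    and S_down: "\<And>s t. t \<in> S \<Longrightarrow> s \<le> t \<Longrightarrow> s \<in> S"
    and zero_in_S: "0 \<in> S"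
    and convex: "convex_on S a"
    and mono: "\<And>s t. s \<le> t \<Longrightarrow> t \<in> S \<Longrightarrow> a s \<le> a t"
begin

definition slope :: "real \<Rightarrow> real \<Rightarrow> real" where
  "slope u v = (a v - a u) / (v - u)"

definition rderiv :: "real \<Rightarrow> real" where
  "rderiv t = Inf (slope t ` {u \<in> S. t < u})"

lemma continuous_on_S: "continuous_on S a"
  by (rule convex_on_continuous[OF open_S convex])

lemma mono_on_S: "t \<in> S \<Longrightarrow> mono_on {s..t} a"
  by (auto intro!: mono_onI mono intro: S_down)

lemma slope_increasing:
  assumes "x < t" "t < y" "x \<in> S" "y \<in> S"
  shows "slope x t \<le> slope x y" and "slope x y \<le> slope t y"
proof -
  have flip: "(p - q) / (r - s) = (q - p) / (s - r)" for p q r s :: real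
    by (metis minus_diff_eq minus_divide_divide)
  show "slope x t \<le> slope x y" "slope x y \<le> slope t y"
    unfolding slope_def using convex_on_slope_le[OF convex assms(3,4) assms(1,2)]
    by (simp_all only: flip[of "a x"] flip[of "a t" "a y"])
qed

lemma exists_right: "t \<in> S \<Longrightarrow> \<exists>u\<in>S. t < u"
proof -
  assume "t \<in> S"
  then obtain e where "e > 0" "ball t e \<subseteq> S" using open_S open_contains_ball by blast
  then show ?thesis by (intro bexI[of _ "t + e/2"]) (auto simp: dist_real_def)
qed

text \<open>The right derivative is a lower bound of slopes to the right (the slopes are
  bounded below by a slope to the left) and an upper bound of slopes to the left.\<close>

lemma rderiv_le_slope: "t \<in> S \<Longrightarrow> u \<in> S \<Longrightarrow> t < u \<Longrightarrow> rderiv t \<le> slope t u"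
  unfolding rderiv_def
proof (rule cInf_lower)
  assume "t \<in> S" "u \<in> S" "t < u"
  then show "slope t u \<in> slope t ` {u \<in> S. t < u}" by auto
  have "slope (t - 1) t \<le> slope t v" if "v \<in> S" "t < v" for v
    using slope_increasing[of "t - 1" t v] S_down[OF \<open>t \<in> S\<close>, of "t - 1"] that by simp
  then show "bdd_below (slope t ` {u \<in> S. t < u})" by (auto intro!: bdd_belowI)
qed

lemma slope_le_rderiv: "t \<in> S \<Longrightarrow> s < t \<Longrightarrow> slope s t \<le> rderiv t"
  unfolding rderiv_def
proof (rule cInf_greatest)
  assume t: "t \<in> S" "s < t"
  then show "slope t ` {u \<in> S. t < u} \<noteq> {}" using exists_right by auto
  fix z assume "z \<in> slope t ` {u \<in> S. t < u}"
  then obtain v where v: "v \<in> S" "t < v" "z = slope t v" by auto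
  then show "slope s t \<le> z" using slope_increasing[of s t v] S_down[of t s] t by auto
qed

lemma rderiv_mono: "s \<le> t \<Longrightarrow> t \<in> S \<Longrightarrow> rderiv s \<le> rderiv t"
proof (cases "s = t")
  case False
  assume "s \<le> t" "t \<in> S"
  with False show ?thesis
    using rderiv_le_slope[of s t] slope_le_rderiv[of t s] S_down[of t s] by linarith
qed simp

lemma rderiv_nonneg: "t \<in> S \<Longrightarrow> 0 \<le> rderiv t"
  using slope_le_rderiv[of t "t - 1"] mono[of "t - 1" t] by (simp add: slope_def)

lemma rderiv_mono_on: "t \<in> S \<Longrightarrow> mono_on {s..t} rderiv"
  by (auto intro!: mono_onI rderiv_mono intro: S_down)

lemma tangent_below: "t \<in> S \<Longrightarrow> s \<in> S \<Longrightarrow> t < s \<Longrightarrow> a t + rderiv t * (s - t) \<le> a s"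
  using rderiv_le_slope[of t s] mult_right_mono[of "rderiv t" "slope t s" "s - t"]
  by (simp add: slope_def)

lemma chord_from_zero: "0 < u \<Longrightarrow> u \<in> S \<Longrightarrow> a u - a 0 \<le> rderiv u * u"
  using slope_le_rderiv[of u 0] mult_right_mono[of "slope 0 u" "rderiv u" u]
  by (simp add: slope_def)

lemma shifted_limit: "t \<in> S \<Longrightarrow> ((\<lambda>h. a (t + c * h)) \<longlongrightarrow> a t) (at_right 0)"
proof -
  assume "t \<in> S"
  then have "isCont a t" using continuous_on_S open_S continuous_on_eq_continuous_at by blast
  moreover have "((\<lambda>h. t + c * h) \<longlongrightarrow> t + c * 0) (at_right 0)"
    by (intro tendsto_intros)
  ultimately show ?thesis using isCont_tendsto_compose[of t a] by simp
qed

lemma rderiv_integrable: "t' \<in> S \<Longrightarrow> rderiv integrable_on {t..t'}"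
  by (rule integrable_on_mono_on[OF rderiv_mono_on])

text \<open>Averaging the difference quotients over a window of
  width \<delta> squeezes the integral between increments of a over slightly shifted
  endpoints, and continuity of a closes the gap as \<delta> tends to 0.\<close>

lemma integral_rderiv_le_shifted:
  assumes tt: "t \<le> t'" "t' + \<delta> \<in> S" and \<delta>: "0 < \<delta>"
  shows "integral {t..t'} rderiv \<le> a (t' + \<delta>) - a t"
proof -
  note incr = integral_increment_bounds[OF mono_on_S[OF tt(2)] tt(1) less_imp_le[OF \<delta>]]
  have "t' \<in> S" using tt S_down \<delta> by simp
  have "\<delta> * integral {t..t'} rderiv = integral {t..t'} (\<lambda>s. \<delta> * rderiv s)" by simp
  also have "\<dots> \<le> integral {t..t'} (\<lambda>s. a (s + \<delta>) - a s)"
  proof (rule integral_le[OF _ incr(1)])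
    show "(\<lambda>s. \<delta> * rderiv s) integrable_on {t..t'}"
      using integrable_cmul[OF rderiv_integrable[OF \<open>t' \<in> S\<close>], of \<delta>] by simp
    fix s assume "s \<in> {t..t'}"
    then have "s \<in> S" "s + \<delta> \<in> S" using tt \<open>t' \<in> S\<close> S_down by auto
    then show "\<delta> * rderiv s \<le> a (s + \<delta>) - a s"
      using rderiv_le_slope[of s "s + \<delta>"] \<delta> by (simp add: slope_def field_simps)
  qed
  also have "\<dots> \<le> \<delta> * (a (t' + \<delta>) - a t)" by (rule incr(3))
  finally show ?thesis using \<delta> by simp
qed

lemma integral_rderiv_ge_shifted:
  assumes tt: "t \<le> t'" "t' \<in> S" and \<delta>: "0 < \<delta>"
  shows "a (t' - \<delta>) - a t \<le> integral {t..t'} rderiv"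
proof -
  have "mono_on {t..t' + \<delta>} (\<lambda>s. a (s - \<delta>))"
    using mono_on_S[OF tt(2), of "t - \<delta>"] by (auto simp: mono_on_def)
  note incr = integral_increment_bounds[OF this tt(1) less_imp_le[OF \<delta>]]
  have "\<delta> * (a (t' - \<delta>) - a t) \<le> integral {t..t'} (\<lambda>s. a (s + \<delta> - \<delta>) - a (s - \<delta>))"
    using incr(2) by simp
  also have "\<dots> \<le> integral {t..t'} (\<lambda>s. \<delta> * rderiv s)"
  proof (rule integral_le[OF incr(1)])
    show "(\<lambda>s. \<delta> * rderiv s) integrable_on {t..t'}"
      using integrable_cmul[OF rderiv_integrable[OF tt(2)], of \<delta>] by simp
    fix s assume "s \<in> {t..t'}"
    then have "s \<in> S" using tt S_down by auto
    then show "a (s + \<delta> - \<delta>) - a (s - \<delta>) \<le> \<delta> * rderiv s"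
      using slope_le_rderiv[of s "s - \<delta>"] \<delta> by (simp add: slope_def field_simps)
  qed
  also have "\<dots> = \<delta> * integral {t..t'} rderiv" by simp
  finally show ?thesis using \<delta> by simp
qed

lemma integral_rderiv:
  assumes tt: "t \<le> t'" "t' \<in> S"
  shows "integral {t..t'} rderiv = a t' - a t"
proof (rule antisym)
  obtain e where e: "e > 0" "ball t' e \<subseteq> S" using open_S tt open_contains_ball by blast
  have "t' + \<delta> \<in> S" if "0 < \<delta>" "\<delta> < e" for \<delta>
    using e that by (auto simp: dist_real_def subset_iff)
  then have "eventually (\<lambda>\<delta>. integral {t..t'} rderiv \<le> a (t' + 1 * \<delta>) - a t) (at_right 0)"
    unfolding eventually_at_right[OF e(1)] using e(1) integral_rderiv_le_shifted[OF tt(1)] by auto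
  then show "integral {t..t'} rderiv \<le> a t' - a t"
    by (rule tendsto_lowerbound[OF tendsto_diff[OF shifted_limit[OF tt(2)] tendsto_const]]) simp
  have "eventually (\<lambda>\<delta>. a (t' + (-1) * \<delta>) - a t \<le> integral {t..t'} rderiv) (at_right 0)"
    unfolding eventually_at_right[OF zero_less_one] using integral_rderiv_ge_shifted[OF tt]
    by (intro exI[of _ 1]) auto
  then show "a t' - a t \<le> integral {t..t'} rderiv"
    by (rule tendsto_upperbound[OF tendsto_diff[OF shifted_limit[OF tt(2)] tendsto_const]]) simp
qed

end

text \<open>The inner factor is the slope of the inner
  function, the outer factor the slope of the outer function (chain rule).\<close>

definition inner_slope :: "real \<Rightarrow> real \<Rightarrow> real" where
  "inner_slope \<theta> x = (if x \<le> 1 then x else x powr \<theta>)"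

definition outer_slope :: "real \<Rightarrow> real \<Rightarrow> real" where
  "outer_slope \<theta> x = (if x \<le> 1 then 1 else x powr (1 - \<theta>))"

lemma inner_times_outer_slope: "0 \<le> x \<Longrightarrow> inner_slope \<theta> x * outer_slope \<theta> x = x"
  by (simp add: inner_slope_def outer_slope_def flip: powr_add)

lemma inner_slope_mono: "0 < \<theta> \<Longrightarrow> 0 \<le> x \<Longrightarrow> x \<le> y \<Longrightarrow> inner_slope \<theta> x \<le> inner_slope \<theta> y"
  unfolding inner_slope_def using ge_one_powr_ge_zero[of y \<theta>] powr_mono2[of \<theta> x y] by auto

lemma outer_slope_mono: "\<theta> < 1 \<Longrightarrow> 0 \<le> x \<Longrightarrow> x \<le> y \<Longrightarrow> outer_slope \<theta> x \<le> outer_slope \<theta> y"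
  unfolding outer_slope_def using ge_one_powr_ge_zero[of y "1 - \<theta>"] powr_mono2[of "1 - \<theta>" x y] by auto

lemma outer_slope_ge_one: "\<theta> < 1 \<Longrightarrow> 1 \<le> outer_slope \<theta> x"
  unfolding outer_slope_def using ge_one_powr_ge_zero[of x "1 - \<theta>"] by auto

lemma inner_slope_le: "\<theta> < 1 \<Longrightarrow> 0 \<le> x \<Longrightarrow> inner_slope \<theta> x \<le> x"
  unfolding inner_slope_def using powr_mono[of \<theta> 1 x] by auto

lemma inner_slope_powr: "1 \<le> x \<Longrightarrow> inner_slope \<theta> x = x powr \<theta>"
  unfolding inner_slope_def by auto

lemma inner_slope_nonneg: "0 \<le> x \<Longrightarrow> 0 \<le> inner_slope \<theta> x"
  unfolding inner_slope_def by auto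

lemma powr_eventually_ge:
  fixes e :: real assumes "0 < e" shows "\<exists>X\<ge>1. \<forall>x\<ge>X. M \<le> x powr e"
proof (intro exI conjI allI impI)
  let ?X = "max 1 (max M 1 powr (1 / e))"
  show "1 \<le> ?X" by simp
  fix x assume x: "?X \<le> x"
  have "M \<le> (max M 1 powr (1 / e)) powr e" using assms by (simp add: powr_powr)
  also have "\<dots> \<le> x powr e" using x assms by (intro powr_mono2) auto
  finally show "M \<le> x powr e" .
qed

lemma inner_slope_unbounded: "0 < \<theta> \<Longrightarrow> \<exists>X. \<forall>x\<ge>X. M \<le> inner_slope \<theta> x"
proof -
  assume "0 < \<theta>"
  then obtain X where "1 \<le> X" "\<forall>x\<ge>X. M \<le> x powr \<theta>" using powr_eventually_ge by blast
  then show ?thesis unfolding inner_slope_def by (intro exI[of _ "X + 1"]) auto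
qed

lemma outer_slope_unbounded: "\<theta> < 1 \<Longrightarrow> \<exists>X. \<forall>x\<ge>X. M \<le> outer_slope \<theta> x"
proof -
  assume "\<theta> < 1"
  then obtain X where "1 \<le> X" "\<forall>x\<ge>X. M \<le> x powr (1 - \<theta>)" using powr_eventually_ge[of "1 - \<theta>"] by auto
  then show ?thesis unfolding outer_slope_def by (intro exI[of _ "X + 1"]) auto
qed

locale nondecr_convex_split = nondecr_convex +
  fixes \<theta> :: real
  assumes \<theta>: "0 < \<theta>" "\<theta> < 1"
begin

definition inner_deriv :: "real \<Rightarrow> real" where
  "inner_deriv t = inner_slope \<theta> (rderiv t)"

definition outer_deriv :: "real \<Rightarrow> real" where
  "outer_deriv t = outer_slope \<theta> (rderiv t)"

definition inner_fn :: "real \<Rightarrow> real" where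
  "inner_fn t = integral {0..t} inner_deriv"

lemma inner_deriv_nonneg: "t \<in> S \<Longrightarrow> 0 \<le> inner_deriv t"
  unfolding inner_deriv_def by (intro inner_slope_nonneg rderiv_nonneg)

lemma inner_deriv_mono_on: "t \<in> S \<Longrightarrow> mono_on {s..t} inner_deriv"
  unfolding inner_deriv_def using \<theta>
  by (auto intro!: mono_onI inner_slope_mono rderiv_mono rderiv_nonneg intro: S_down)

lemma inner_deriv_le_rderiv: "t \<in> S \<Longrightarrow> inner_deriv t \<le> rderiv t"
  unfolding inner_deriv_def using \<theta> by (intro inner_slope_le rderiv_nonneg) auto

lemma inner_times_outer_deriv: "t \<in> S \<Longrightarrow> inner_deriv t * outer_deriv t = rderiv t"
  unfolding inner_deriv_def outer_deriv_def by (intro inner_times_outer_slope rderiv_nonneg)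

lemma outer_deriv_mono: "s \<le> t \<Longrightarrow> t \<in> S \<Longrightarrow> outer_deriv s \<le> outer_deriv t"
  unfolding outer_deriv_def using \<theta> by (intro outer_slope_mono rderiv_nonneg rderiv_mono) (auto intro: S_down)

lemma outer_deriv_ge_one: "1 \<le> outer_deriv t"
  unfolding outer_deriv_def by (rule outer_slope_ge_one[OF \<theta>(2)])

lemma inner_deriv_integrable: "t' \<in> S \<Longrightarrow> inner_deriv integrable_on {t..t'}"
  by (rule integrable_on_mono_on[OF inner_deriv_mono_on])

lemma inner_diff: "0 \<le> t \<Longrightarrow> t \<le> t' \<Longrightarrow> t' \<in> S \<Longrightarrow> inner_fn t' - inner_fn t = integral {t..t'} inner_deriv"
  unfolding inner_fn_def using Henstock_Kurzweil_Integration.integral_combine[of 0 t t' inner_deriv]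
  by (simp add: inner_deriv_integrable)

lemma inner_nonneg: "t \<in> S \<Longrightarrow> 0 \<le> inner_fn t"
  unfolding inner_fn_def
  by (rule integral_nonneg[OF inner_deriv_integrable]) (auto intro: inner_deriv_nonneg S_down)

lemma inner_tangent_below:
  assumes "t \<in> S" "t' \<in> S" "0 \<le> t" "0 \<le> t'"
  shows "inner_fn t + inner_deriv t * (t' - t) \<le> inner_fn t'"
proof (cases "t \<le> t'")
  case True
  then show ?thesis
    using inner_diff[of t t'] mono_on_integral_bounds(1)[OF inner_deriv_mono_on[OF assms(2)] True] assms
    by (simp add: mult.commute)
next
  case False
  then have "t' \<le> t" by simp
  then show ?thesis
    using inner_diff[of t' t] mono_on_integral_bounds(2)[OF inner_deriv_mono_on[OF assms(1)]] assms
    by (simp add: algebra_simps)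
qed

lemma inner_le: "t \<in> S \<Longrightarrow> 0 \<le> t \<Longrightarrow> inner_fn t \<le> a t - a 0"
  unfolding inner_fn_def integral_rderiv[symmetric]
  by (intro integral_le inner_deriv_integrable rderiv_integrable)
     (auto intro: inner_deriv_le_rderiv S_down)

text \<open>Measured against the inner function, a has slope outer_deriv t at t: this is the
  supporting line of the outer function at the point inner_fn t.  Both cases follow from
  integral_rderiv, since rderiv = outer_deriv * inner_deriv with outer_deriv monotone.\<close>

lemma outer_tangent_below:
  assumes t: "t \<in> S" "0 \<le> t" and t': "t' \<in> S" "0 \<le> t'"
  shows "a t + outer_deriv t * (inner_fn t' - inner_fn t) \<le> a t'"
proof -
  have scaled_int: "(\<lambda>s. outer_deriv t * inner_deriv s) integrable_on {p..q}" if "q \<in> S" for p q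
    using integrable_cmul[OF inner_deriv_integrable[OF that], of "outer_deriv t"] by simp
  have factor: "rderiv s = outer_deriv s * inner_deriv s" if "s \<in> S" for s
    using inner_times_outer_deriv[OF that] by (simp add: mult.commute)
  show ?thesis
  proof (cases "t \<le> t'")
    case True
    have "outer_deriv t * (inner_fn t' - inner_fn t) = integral {t..t'} (\<lambda>s. outer_deriv t * inner_deriv s)"
      using inner_diff[of t t'] True t t' by simp
    also have "\<dots> \<le> integral {t..t'} rderiv"
    proof (rule integral_le[OF scaled_int[OF t'(1)] rderiv_integrable[OF t'(1)]])
      fix s assume "s \<in> {t..t'}"
      then have "s \<in> S" "t \<le> s" using t' S_down by auto
      then show "outer_deriv t * inner_deriv s \<le> rderiv s"
        unfolding factor[OF \<open>s \<in> S\<close>] by (intro mult_right_mono outer_deriv_mono inner_deriv_nonneg)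
    qed
    also have "\<dots> = a t' - a t" using integral_rderiv True t' by simp
    finally show ?thesis by simp
  next
    case False
    have "a t - a t' = integral {t'..t} rderiv" using integral_rderiv False t by simp
    also have "\<dots> \<le> integral {t'..t} (\<lambda>s. outer_deriv t * inner_deriv s)"
    proof (rule integral_le[OF rderiv_integrable[OF t(1)] scaled_int[OF t(1)]])
      fix s assume "s \<in> {t'..t}"
      then have "s \<in> S" "s \<le> t" using t S_down by auto
      then show "rderiv s \<le> outer_deriv t * inner_deriv s"
        unfolding factor[OF \<open>s \<in> S\<close>] using t by (intro mult_right_mono outer_deriv_mono inner_deriv_nonneg)
    qed
    also have "\<dots> = outer_deriv t * (inner_fn t - inner_fn t')"
      using inner_diff[of t' t] False t t' by simp
    finally show ?thesis by (simp add: algebra_simps)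
  qed
qed

lemma inner_lower_bound: "t \<in> S \<Longrightarrow> 0 \<le> t \<Longrightarrow> (t / 2) * inner_deriv (t / 2) \<le> inner_fn t"
proof -
  assume t: "t \<in> S" "0 \<le> t"
  then show ?thesis
    using inner_diff[of "t / 2" t] mono_on_integral_bounds(1)[OF inner_deriv_mono_on[OF t(1)], of "t / 2"]
      inner_nonneg[of "t / 2"] S_down[of t "t / 2"] by simp
qed

end

lemma ennconvexI:
  assumes "\<And>x y l. 0 < l \<Longrightarrow> l < 1 \<Longrightarrow>
     g (ennreal l * x + ennreal (1 - l) * y) \<le> ennreal l * g x + ennreal (1 - l) * g y"
  shows "ennconvex g"
  unfolding ennconvex_def
proof (intro allI impI)
  fix x y and l :: real assume "0 \<le> l \<and> l \<le> 1"
  then consider "l = 0" | "l = 1" | "0 < l" "l < 1" by fastforce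
  then show "g (ennreal l * x + ennreal (1 - l) * y) \<le> ennreal l * g x + ennreal (1 - l) * g y"
    by cases (use assms in auto)
qed

lemma ennconvex_SUP:
  assumes "\<And>i. i \<in> I \<Longrightarrow> ennconvex (f i)"
  shows "ennconvex (\<lambda>x. SUP i\<in>I. f i x)"
  unfolding ennconvex_def
proof (intro allI impI)
  fix x y and l :: real assume l: "0 \<le> l \<and> l \<le> 1"
  let ?z = "ennreal l * x + ennreal (1 - l) * y"
  show "(SUP i\<in>I. f i ?z) \<le> ennreal l * (SUP i\<in>I. f i x) + ennreal (1 - l) * (SUP i\<in>I. f i y)"
  proof (rule SUP_least)
    fix i assume i: "i \<in> I"
    have "f i ?z \<le> ennreal l * f i x + ennreal (1 - l) * f i y"
      using assms[OF i] l unfolding ennconvex_def by blast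
    also have "\<dots> \<le> ennreal l * (SUP i\<in>I. f i x) + ennreal (1 - l) * (SUP i\<in>I. f i y)"
      by (intro add_mono mult_left_mono SUP_upper i) auto
    finally show "f i ?z \<le> \<dots>" .
  qed
qed

lemma ennconvex_sup: "ennconvex f \<Longrightarrow> ennconvex g \<Longrightarrow> ennconvex (\<lambda>x. sup (f x) (g x))"
  using ennconvex_SUP[of "{f, g}" "\<lambda>h. h"] by auto

lemma mono_SUP_family:
  "(\<And>i. i \<in> I \<Longrightarrow> mono (f i)) \<Longrightarrow> mono (\<lambda>x. SUP i\<in>I. f i x :: 'a::complete_lattice)"
  by (auto intro!: monoI SUP_mono simp: mono_def)

text \<open>Convex combinations commute with ennreal up to an inequality (ennreal truncates
  negative arguments at 0).\<close>

lemma ennreal_convex_comb_le: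
  assumes "0 \<le> l" "l \<le> 1"
  shows "ennreal (l * x + (1 - l) * y) \<le> ennreal l * ennreal x + ennreal (1 - l) * ennreal y"
proof -
  have "ennreal (l * x + (1 - l) * y) \<le> ennreal (l * max 0 x + (1 - l) * max 0 y)"
    using assms by (intro ennreal_leI add_mono mult_left_mono) auto
  also have "\<dots> = ennreal (l * max 0 x) + ennreal ((1 - l) * max 0 y)"
    using assms by (intro ennreal_plus) auto
  also have "\<dots> = ennreal l * ennreal x + ennreal (1 - l) * ennreal y"
    using assms by (simp add: ennreal_mult ennreal_max_0)
  finally show ?thesis .
qed

text \<open>The affine function c + k x on [0,\<infinity>), truncated at 0 and extended by \<infinity> at
  \<infinity>.  Suprema of such functions define both factors.\<close>

definition affine_enn :: "real \<Rightarrow> real \<Rightarrow> ennreal \<Rightarrow> ennreal" where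
  "affine_enn c k x = (if x = \<infinity> then \<infinity> else ennreal (c + k * enn2real x))"

lemma affine_enn_ennreal: "0 \<le> s \<Longrightarrow> affine_enn c k (ennreal s) = ennreal (c + k * s)"
  by (simp add: affine_enn_def)

lemma affine_enn_top: "affine_enn c k \<infinity> = \<infinity>"
  by (simp add: affine_enn_def)

lemma affine_enn_mono: "0 \<le> k \<Longrightarrow> mono (affine_enn c k)"
proof (rule monoI)
  fix x y :: ennreal assume "0 \<le> k" "x \<le> y"
  then show "affine_enn c k x \<le> affine_enn c k y"
    by (cases x; cases y) (auto simp: affine_enn_def top_unique intro!: ennreal_leI mult_left_mono)
qed

lemma affine_enn_convex: "ennconvex (affine_enn c k)"
proof (rule ennconvexI)
  fix x y and l :: real assume l: "0 < l" "l < 1"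
  show "affine_enn c k (ennreal l * x + ennreal (1 - l) * y)
      \<le> ennreal l * affine_enn c k x + ennreal (1 - l) * affine_enn c k y"
  proof (cases "x = \<infinity> \<or> y = \<infinity>")
    case True
    then show ?thesis using l by (auto simp: affine_enn_def ennreal_mult_top top_add)
  next
    case False
    then obtain x' y' where xy: "x = ennreal x'" "y = ennreal y'" "0 \<le> x'" "0 \<le> y'"
      by (cases x; cases y) auto
    have "ennreal l * x + ennreal (1 - l) * y = ennreal (l * x' + (1 - l) * y')"
      using xy l by (simp add: ennreal_mult ennreal_plus)
    moreover have "0 \<le> l * x' + (1 - l) * y'" using xy l by simp
    ultimately have "affine_enn c k (ennreal l * x + ennreal (1 - l) * y)
        = ennreal (c + k * (l * x' + (1 - l) * y'))"
      by (simp add: affine_enn_ennreal)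
    also have "\<dots> = ennreal (l * (c + k * x') + (1 - l) * (c + k * y'))"
      by (simp add: algebra_simps)
    also have "\<dots> \<le> ennreal l * affine_enn c k x + ennreal (1 - l) * affine_enn c k y"
      using ennreal_convex_comb_le[of l] l xy by (simp add: affine_enn_def)
    finally show ?thesis .
  qed
qed

text \<open>The convex indicator of the set where f is infinite; adding it to the inner function
  makes it infinite exactly where \<phi> is.\<close>

definition top_indicator :: "(ennreal \<Rightarrow> ennreal) \<Rightarrow> ennreal \<Rightarrow> ennreal" where
  "top_indicator f x = (if f x = \<infinity> then \<infinity> else 0)"

lemma top_indicator_mono: "mono f \<Longrightarrow> mono (top_indicator f)"
proof (rule monoI)
  fix x y :: ennreal assume "mono f" "x \<le> y"
  then have "f x \<le> f y" by (rule monoD)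
  then show "top_indicator f x \<le> top_indicator f y" by (auto simp: top_indicator_def top_unique)
qed

lemma top_indicator_convex:
  assumes "ennconvex f" shows "ennconvex (top_indicator f)"
proof (rule ennconvexI)
  fix x y and l :: real assume l: "0 < l" "l < 1"
  show "top_indicator f (ennreal l * x + ennreal (1 - l) * y)
      \<le> ennreal l * top_indicator f x + ennreal (1 - l) * top_indicator f y"
  proof (cases "f x = \<infinity> \<or> f y = \<infinity>")
    case True
    then show ?thesis using l by (auto simp: top_indicator_def ennreal_mult_top)
  next
    case False
    have "f (ennreal l * x + ennreal (1 - l) * y) \<le> ennreal l * f x + ennreal (1 - l) * f y"
      using assms l unfolding ennconvex_def by simp
    also have "\<dots> < \<infinity>" using False by (simp add: less_top ennreal_mult_less_top)
    finally show ?thesis using False by (simp add: top_indicator_def)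
  qed
qed

lemma superlinear_if_steep_minorants:
  fixes f :: "ennreal \<Rightarrow> ennreal"
  assumes steep: "\<And>K. \<exists>c k. K \<le> k \<and> (\<forall>t\<ge>0. ennreal (c + k * t) \<le> f (ennreal t))"
  shows "((\<lambda>t::real. f (ennreal t) / ennreal t) \<longlongrightarrow> \<infinity>) at_top"
proof (rule order_tendstoI)
  fix y :: ennreal assume "y < \<infinity>"
  then obtain r where r: "y = ennreal r" "0 \<le> r" by (cases y) auto
  obtain c k where k: "r + 2 \<le> k" "\<forall>t\<ge>0. ennreal (c + k * t) \<le> f (ennreal t)"
    using steep[of "r + 2"] by blast
  show "eventually (\<lambda>t. y < f (ennreal t) / ennreal t) at_top"
    unfolding eventually_at_top_linorder
  proof (intro exI[of _ "max \<bar>c\<bar> 1"] allI impI)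
    fix t assume t: "max \<bar>c\<bar> 1 \<le> t"
    have "(r + 2) * t \<le> k * t" using mult_right_mono[OF k(1), of t] t by simp
    then have "(r + 1) * t \<le> c + k * t"
      using t abs_ge_minus_self[of c] by (simp add: algebra_simps)
    then have "ennreal ((r + 1) * t) \<le> ennreal (c + k * t)" by (rule ennreal_leI)
    also have "\<dots> \<le> f (ennreal t)" using k(2) t by simp
    finally have steep_t: "ennreal ((r + 1) * t) \<le> f (ennreal t)" .
    have "y < ennreal (r + 1)" using r by (simp add: ennreal_lessI)
    also have "ennreal (r + 1) = ennreal ((r + 1) * t) / ennreal t"
      using t r by (simp add: divide_ennreal)
    also have "\<dots> \<le> f (ennreal t) / ennreal t"
      by (rule divide_right_mono_ennreal[OF steep_t])
    finally show "y < f (ennreal t) / ennreal t" .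
  qed
qed (simp add: infinity_ennreal_def)

lemma nn_integral_ray_infinite:
  fixes f :: "real \<Rightarrow> ennreal"
  assumes c: "0 < c" and bound: "\<And>t. T \<le> t \<Longrightarrow> ennreal c \<le> f t"
  shows "(\<integral>\<^sup>+ t\<in>{ts..}. f t \<partial>lborel) = \<infinity>"
proof -
  define T' where "T' = max T ts"
  have "ennreal c * of_nat n \<le> (\<integral>\<^sup>+ t\<in>{ts..}. f t \<partial>lborel)" for n
  proof -
    have "ennreal c * of_nat n = (\<integral>\<^sup>+ t. ennreal c * indicator {T'..T' + real n} t \<partial>lborel)"
      using c by (simp add: nn_integral_cmult_indicator ennreal_of_nat_eq_real_of_nat)
    also have "\<dots> \<le> (\<integral>\<^sup>+ t\<in>{ts..}. f t \<partial>lborel)"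
      using bound by (intro nn_integral_mono) (auto simp: T'_def indicator_def)
    finally show ?thesis .
  qed
  then have "(SUP n. ennreal c * of_nat n) \<le> (\<integral>\<^sup>+ t\<in>{ts..}. f t \<partial>lborel)"
    by (rule SUP_least)
  moreover have "(SUP n. ennreal c * of_nat n) = \<infinity>"
    using c by (simp add: SUP_mult_left_ennreal[symmetric] ennreal_SUP_of_nat_eq_top ennreal_mult_top)
  ultimately show ?thesis by (simp add: top_unique)
qed

locale convex_enn =
  fixes \<phi> :: "ennreal \<Rightarrow> ennreal"
  assumes mono_phi: "mono \<phi>" and cont_phi: "continuous_on UNIV \<phi>" and conv_phi: "ennconvex \<phi>"
    and phi_zero_finite: "\<phi> 0 < \<infinity>"
begin

definition fin_dom :: "real set" where
  "fin_dom = {t. \<phi> (ennreal t) < \<infinity>}"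

definition phi_real :: "real \<Rightarrow> real" where
  "phi_real t = enn2real (\<phi> (ennreal t))"

lemma phi_ennreal_mono: "s \<le> t \<Longrightarrow> \<phi> (ennreal s) \<le> \<phi> (ennreal t)"
  using mono_phi ennreal_leI by (auto simp: mono_def)

lemma phi_real_nonneg: "0 \<le> phi_real t"
  unfolding phi_real_def by simp

lemma phi_real_enn: "t \<in> fin_dom \<Longrightarrow> \<phi> (ennreal t) = ennreal (phi_real t)"
  unfolding fin_dom_def phi_real_def by simp

lemma fin_dom_down: "t \<in> fin_dom \<Longrightarrow> s \<le> t \<Longrightarrow> s \<in> fin_dom"
  unfolding fin_dom_def using phi_ennreal_mono by (auto intro: le_less_trans)

lemma continuous_phi_ennreal: "continuous_on UNIV (\<lambda>t::real. \<phi> (ennreal t))"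
  by (rule continuous_on_compose2[OF cont_phi continuous_on_ennreal[OF continuous_on_id]]) auto

lemma convex_phi_real: "convex_on fin_dom phi_real"
proof (rule convex_onI)
  show "convex fin_dom"
    unfolding is_interval_convex_1[symmetric] is_interval_1 using fin_dom_down by blast
  fix u x y :: real assume u: "0 < u" "u < 1" and x: "x \<in> fin_dom" and y: "y \<in> fin_dom"
  let ?z = "(1 - u) *\<^sub>R x + u *\<^sub>R y"
  have "(1 - u) * x \<le> (1 - u) * max x y" "u * y \<le> u * max x y"
    using u by (intro mult_left_mono; simp)+
  then have "?z \<le> max x y" by (simp add: algebra_simps)
  then have z: "?z \<in> fin_dom" using x y fin_dom_down by (metis max_def)
  have "\<phi> (ennreal ?z) \<le> \<phi> (ennreal (1 - u) * ennreal x + ennreal (1 - (1 - u)) * ennreal y)"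
    using ennreal_convex_comb_le[of "1 - u" x y] u by (intro monoD[OF mono_phi]) simp
  also have "\<dots> \<le> ennreal (1 - u) * \<phi> (ennreal x) + ennreal (1 - (1 - u)) * \<phi> (ennreal y)"
    using conv_phi[unfolded ennconvex_def, rule_format, of "1 - u" "ennreal x" "ennreal y"] u by simp
  also have "\<dots> = ennreal ((1 - u) * phi_real x + u * phi_real y)"
    using u x y by (simp add: phi_real_enn phi_real_nonneg ennreal_mult ennreal_plus)
  finally have "ennreal (phi_real ?z) \<le> ennreal ((1 - u) * phi_real x + u * phi_real y)"
    using z by (simp add: phi_real_enn)
  moreover have "0 \<le> (1 - u) * phi_real x + u * phi_real y" using u by (simp add: phi_real_nonneg)
  ultimately show "phi_real ?z \<le> (1 - u) * phi_real x + u * phi_real y"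
    by (simp add: ennreal_le_iff)
qed

sublocale nondecr_convex phi_real fin_dom
proof
  show "open fin_dom"
    unfolding fin_dom_def by (rule open_Collect_less[OF continuous_phi_ennreal]) simp
  show "0 \<in> fin_dom" using phi_zero_finite by (simp add: fin_dom_def)
  show "convex_on fin_dom phi_real" by (rule convex_phi_real)
  show "phi_real s \<le> phi_real t" if "s \<le> t" "t \<in> fin_dom" for s t
    using that phi_ennreal_mono unfolding phi_real_def fin_dom_def by (auto intro!: enn2real_mono)
  show "s \<in> fin_dom" if "t \<in> fin_dom" "s \<le> t" for s t by (rule fin_dom_down[OF that])
qed

text \<open>If the right derivative stays bounded on [0, \<infinity>), then \<phi> grows at most linearly
  and so cannot blow up at a finite point: its finiteness domain is all of the reals.\<close>

lemma rderiv_bounded_imp_finite: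
  assumes bounded: "\<forall>t\<in>fin_dom. 0 \<le> t \<longrightarrow> rderiv t \<le> M"
  shows "fin_dom = UNIV"
proof (rule ccontr)
  assume "fin_dom \<noteq> UNIV"
  then obtain u where u: "u \<notin> fin_dom" by auto
  define M' where "M' = max M 1"
  let ?C = "{v. \<phi> (ennreal v) \<le> ennreal (phi_real 0 + M' * max v 0)}"
  have "fin_dom \<subseteq> ?C"
  proof
    fix v assume v: "v \<in> fin_dom"
    have "phi_real v \<le> phi_real 0 + M' * max v 0"
    proof (cases "v \<le> 0")
      case True
      then show ?thesis using mono[OF True zero_in_S] by simp
    next
      case False
      have "phi_real v - phi_real 0 \<le> rderiv v * v" using chord_from_zero[OF _ v] False by simp
      also have "\<dots> \<le> M' * v" using bounded v False by (intro mult_right_mono) (auto simp: M'_def)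
      finally show ?thesis using False by simp
    qed
    then show "v \<in> ?C" using phi_real_enn[OF v] by (simp add: ennreal_leI)
  qed
  moreover have "closed ?C"
    by (rule closed_Collect_le[OF continuous_phi_ennreal]) (intro continuous_on_ennreal continuous_intros)
  ultimately have closure_C: "closure fin_dom \<subseteq> ?C" by (rule closure_minimal)
  have bdd: "bdd_above fin_dom"
    unfolding bdd_above_def using u fin_dom_down by (metis linorder_le_cases)
  have "Sup fin_dom \<in> closure fin_dom" using closure_contains_Sup[OF _ bdd] zero_in_S by auto
  then have "\<phi> (ennreal (Sup fin_dom)) < \<infinity>" using closure_C by (auto intro: le_less_trans)
  then obtain v where "v \<in> fin_dom" "Sup fin_dom < v"
    using exists_right[of "Sup fin_dom"] by (auto simp: fin_dom_def)
  then show False using cSup_upper[OF _ bdd, of v] by simp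
qed

text \<open>The integrability hypothesis forces \<phi> to grow superlinearly, i.e. its right
  derivative is unbounded: otherwise t / \<phi> t stays bounded below and is not integrable.\<close>

lemma rderiv_unbounded:
  assumes alpha: "\<alpha> > 0"
    and integ: "(\<integral>\<^sup>+ t\<in>{ts..}. ratio_pow \<phi> \<alpha> t \<partial>lborel) < \<infinity>"
  shows "\<exists>t\<in>fin_dom. 0 \<le> t \<and> M \<le> rderiv t"
proof (rule ccontr)
  assume "\<not> ?thesis"
  then have bounded: "\<forall>t\<in>fin_dom. 0 \<le> t \<longrightarrow> rderiv t \<le> M" by auto
  have everywhere: "t \<in> fin_dom" for t using rderiv_bounded_imp_finite[OF bounded] by simp
  define M' where "M' = max M 1"
  define T where "T = max (phi_real 0) 1"
  define c where "c = (1 / (2 * M')) powr \<alpha>"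
  have M': "M \<le> M'" "1 \<le> M'" unfolding M'_def by auto
  have "ennreal c \<le> ratio_pow \<phi> \<alpha> t" if t: "T \<le> t" for t
  proof (cases "phi_real t = 0")
    case True
    then show ?thesis using phi_real_enn[OF everywhere] by (simp add: ratio_pow_def)
  next
    case False
    then have pos: "0 < phi_real t" using phi_real_nonneg[of t] by simp
    have "0 < t" "phi_real 0 \<le> t" using t by (auto simp: T_def)
    have "phi_real t - phi_real 0 \<le> rderiv t * t" by (rule chord_from_zero[OF \<open>0 < t\<close> everywhere])
    also have "\<dots> \<le> M' * t"
      using bounded everywhere[of t] \<open>0 < t\<close> M' by (intro mult_right_mono) force+
    moreover have "t \<le> M' * t" using mult_right_mono[OF M'(2), of t] \<open>0 < t\<close> by simp
    ultimately have "phi_real t \<le> 2 * M' * t" using \<open>phi_real 0 \<le> t\<close> by simp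
    then have "1 / (2 * M') \<le> t / phi_real t"
      using pos \<open>0 < t\<close> M' by (simp add: field_simps)
    then have "c \<le> (t / phi_real t) powr \<alpha>" unfolding c_def using alpha M' by (intro powr_mono2) auto
    then show ?thesis using phi_real_enn[OF everywhere] pos by (simp add: ratio_pow_def ennreal_leI)
  qed
  then have "(\<integral>\<^sup>+ t\<in>{ts..}. ratio_pow \<phi> \<alpha> t \<partial>lborel) = \<infinity>"
    by (intro nn_integral_ray_infinite[of c]) (use M' in \<open>auto simp: c_def\<close>)
  then show False using integ by simp
qed

lemma phi_top:
  assumes steep: "t1 \<in> fin_dom" "0 \<le> t1" "1 \<le> rderiv t1"
  shows "\<phi> \<infinity> = \<infinity>"
proof (rule ccontr)
  assume "\<phi> \<infinity> \<noteq> \<infinity>"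
  define B where "B = enn2real (\<phi> \<infinity>)"
  have below_top: "\<phi> (ennreal t) \<le> \<phi> \<infinity>" for t using mono_phi by (simp add: mono_def)
  then have everywhere: "t \<in> fin_dom" for t
    using \<open>\<phi> \<infinity> \<noteq> \<infinity>\<close> unfolding fin_dom_def by (auto intro: le_less_trans simp: less_top)
  define s where "s = t1 + B + 1"
  have "0 \<le> B" unfolding B_def by simp
  then have "phi_real t1 + rderiv t1 * (s - t1) \<le> phi_real s"
    using tangent_below[OF steep(1) everywhere, of s] by (simp add: s_def)
  moreover have "s - t1 \<le> rderiv t1 * (s - t1)"
    using steep \<open>0 \<le> B\<close> mult_right_mono[of 1 "rderiv t1" "s - t1"] by (simp add: s_def)
  moreover have "phi_real s \<le> B"
    unfolding phi_real_def B_def using below_top[of s] \<open>\<phi> \<infinity> \<noteq> \<infinity>\<close>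
    by (intro enn2real_mono) (auto simp: less_top)
  ultimately show False using phi_real_nonneg[of t1] by (simp add: s_def)
qed

end

lemma ratio_pow_measurable:
  assumes [measurable]: "g \<in> borel_measurable borel"
  shows "ratio_pow g a \<in> borel_measurable borel"
  unfolding ratio_pow_def by measurable

lemma nn_integral_ray_halve:
  fixes f :: "real \<Rightarrow> ennreal"
  assumes [measurable]: "f \<in> borel_measurable borel"
  shows "(\<integral>\<^sup>+ t. f (t / 2) * indicator {2 * T..} t \<partial>lborel) = 2 * (\<integral>\<^sup>+ x\<in>{T..}. f x \<partial>lborel)"
proof -
  let ?g = "\<lambda>t. f (t / 2) * indicator {2 * T..} t"
  have "(\<integral>\<^sup>+ t. ?g t \<partial>lborel) = 2 * (\<integral>\<^sup>+ x. ?g (0 + 2 * x) \<partial>lborel)"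
    using nn_integral_real_affine[of ?g 2 0] by simp
  also have "(\<lambda>x. ?g (0 + 2 * x)) = (\<lambda>x. f x * indicator {T..} x)"
    by (auto simp: indicator_def)
  finally show ?thesis .
qed

lemma ratio_power_estimate:
  fixes s bt as a0 \<theta> \<alpha> \<alpha>' \<sigma> :: real
  assumes s: "0 < s" and \<sigma>: "\<sigma> = (as - a0) / s" "1 \<le> \<sigma>"
    and bt: "s * \<sigma> powr \<theta> \<le> bt" and as: "2 * a0 \<le> as" "0 \<le> a0"
    and exps: "0 < \<theta>" "\<theta> * \<alpha>' = \<alpha>" "0 < \<alpha>"
  shows "(2 * s / bt) powr \<alpha>' \<le> 2 powr \<alpha>' * 2 powr \<alpha> * (s / as) powr \<alpha>"
proof -
  have \<alpha>': "0 < \<alpha>'" using exps by (metis zero_less_mult_pos)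
  have \<sigma>_pos: "0 < \<sigma>" using \<sigma> by simp
  have bt_pos: "0 < bt" using bt s \<sigma>_pos by (smt (verit) mult_pos_pos powr_gt_zero)
  have as_a0: "as - a0 = \<sigma> * s" using \<sigma> s by simp
  then have as_pos: "0 < as" using \<sigma>_pos s as by (smt (verit) mult_pos_pos)
  define \<rho> where "\<rho> = 1 / \<sigma>"
  have \<rho>_pos: "0 < \<rho>" unfolding \<rho>_def using \<sigma>_pos by simp
  have "2 * s / bt \<le> 2 * s / (s * \<sigma> powr \<theta>)"
    using bt bt_pos s \<sigma>_pos by (intro divide_left_mono) auto
  also have "\<dots> = 2 * \<rho> powr \<theta>" unfolding \<rho>_def using s \<sigma>_pos by (simp add: powr_divide)
  finally have "(2 * s / bt) powr \<alpha>' \<le> (2 * \<rho> powr \<theta>) powr \<alpha>'"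
    using bt_pos s \<alpha>' by (intro powr_mono2) auto
  also have "\<dots> = 2 powr \<alpha>' * \<rho> powr \<alpha>"
    using \<rho>_pos exps by (simp add: powr_mult powr_powr)
  also have "\<rho> powr \<alpha> \<le> (2 * (s / as)) powr \<alpha>"
  proof (rule powr_mono2)
    have "\<rho> = s / (as - a0)" unfolding \<rho>_def using as_a0 s \<sigma>_pos by simp
    also have "\<dots> \<le> s / (as / 2)"
      using as as_a0 s \<sigma>_pos as_pos by (intro divide_left_mono) auto
    finally show "\<rho> \<le> 2 * (s / as)" by (simp add: mult.commute)
  qed (use \<rho>_pos exps in auto)
  also have "(2 * (s / as)) powr \<alpha> = 2 powr \<alpha> * (s / as) powr \<alpha>"
    using powr_mult[of 2 "s / as" \<alpha>] s as_pos by simp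
  finally show ?thesis by (simp add: mult.assoc)
qed

locale convex_enn_split = convex_enn +
  fixes \<theta> :: real
  assumes \<theta>_bounds: "0 < \<theta>" "\<theta> < 1"
begin

sublocale nondecr_convex_split phi_real fin_dom \<theta>
  by unfold_locales (fact \<theta>_bounds)+

definition nonneg_dom :: "real set" where
  "nonneg_dom = {t \<in> fin_dom. 0 \<le> t}"

definition inner_enn :: "ennreal \<Rightarrow> ennreal" where
  "inner_enn x = sup (SUP t\<in>nonneg_dom. affine_enn (inner_fn t - inner_deriv t * t) (inner_deriv t) x)
     (top_indicator \<phi> x)"

definition outer_enn :: "ennreal \<Rightarrow> ennreal" where
  "outer_enn x = (SUP t\<in>nonneg_dom. affine_enn (phi_real t - outer_deriv t * inner_fn t) (outer_deriv t) x)"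

text \<open>On the reals where \<phi> is finite, inner_enn equals the real inner function, since
  all supporting lines lie below it; similarly outer_enn (inner_fn t) = phi_real t.\<close>

lemma inner_enn_ennreal:
  assumes t0: "t0 \<in> nonneg_dom"
  shows "inner_enn (ennreal t0) = ennreal (inner_fn t0)"
proof -
  have t0': "t0 \<in> fin_dom" "0 \<le> t0" using t0 unfolding nonneg_dom_def by auto
  have "(SUP t\<in>nonneg_dom. affine_enn (inner_fn t - inner_deriv t * t) (inner_deriv t) (ennreal t0))
      = ennreal (inner_fn t0)"
  proof (rule antisym)
    show "(SUP t\<in>nonneg_dom. affine_enn (inner_fn t - inner_deriv t * t) (inner_deriv t) (ennreal t0))
        \<le> ennreal (inner_fn t0)"
    proof (rule SUP_least)
      fix t assume "t \<in> nonneg_dom"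
      then have "inner_fn t + inner_deriv t * (t0 - t) \<le> inner_fn t0"
        using inner_tangent_below[of t t0] t0' unfolding nonneg_dom_def by auto
      then show "affine_enn (inner_fn t - inner_deriv t * t) (inner_deriv t) (ennreal t0) \<le> ennreal (inner_fn t0)"
        using t0' by (simp add: affine_enn_ennreal ennreal_leI algebra_simps)
    qed
    show "ennreal (inner_fn t0)
        \<le> (SUP t\<in>nonneg_dom. affine_enn (inner_fn t - inner_deriv t * t) (inner_deriv t) (ennreal t0))"
      by (rule SUP_upper2[OF t0]) (simp add: affine_enn_ennreal t0')
  qed
  moreover have "top_indicator \<phi> (ennreal t0) = 0"
    using t0' unfolding top_indicator_def fin_dom_def by simp
  ultimately show ?thesis unfolding inner_enn_def by (simp add: sup_max)
qed

lemma inner_enn_infinite: "\<phi> x = \<infinity> \<Longrightarrow> inner_enn x = \<infinity>"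
  unfolding inner_enn_def top_indicator_def by simp

lemma outer_enn_ennreal:
  assumes t0: "t0 \<in> nonneg_dom"
  shows "outer_enn (ennreal (inner_fn t0)) = ennreal (phi_real t0)"
  unfolding outer_enn_def
proof (rule antisym)
  have t0': "t0 \<in> fin_dom" "0 \<le> t0" using t0 unfolding nonneg_dom_def by auto
  have nonneg: "0 \<le> inner_fn t0" using inner_nonneg t0' by simp
  show "(SUP t\<in>nonneg_dom. affine_enn (phi_real t - outer_deriv t * inner_fn t) (outer_deriv t)
      (ennreal (inner_fn t0))) \<le> ennreal (phi_real t0)"
  proof (rule SUP_least)
    fix t assume "t \<in> nonneg_dom"
    then have "phi_real t + outer_deriv t * (inner_fn t0 - inner_fn t) \<le> phi_real t0"
      using outer_tangent_below[of t t0] t0' unfolding nonneg_dom_def by auto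
    then show "affine_enn (phi_real t - outer_deriv t * inner_fn t) (outer_deriv t) (ennreal (inner_fn t0))
        \<le> ennreal (phi_real t0)"
      using nonneg by (simp add: affine_enn_ennreal ennreal_leI algebra_simps)
  qed
  show "ennreal (phi_real t0) \<le> (SUP t\<in>nonneg_dom. affine_enn (phi_real t - outer_deriv t * inner_fn t)
      (outer_deriv t) (ennreal (inner_fn t0)))"
    by (rule SUP_upper2[OF t0]) (simp add: affine_enn_ennreal nonneg)
qed

lemma outer_enn_top: "outer_enn \<infinity> = \<infinity>"
  using zero_in_S unfolding outer_enn_def affine_enn_top nonneg_dom_def by (intro SUP_const) auto

lemma finite_point:
  assumes "\<phi> \<infinity> = \<infinity>" "\<phi> x \<noteq> \<infinity>"
  obtains t0 where "t0 \<in> nonneg_dom" "x = ennreal t0"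
proof -
  have "x \<noteq> \<infinity>" using assms by auto
  then have x: "ennreal (enn2real x) = x" by (simp add: less_top)
  have "\<phi> (ennreal (enn2real x)) < \<infinity>" unfolding x using assms(2) by (simp add: less_top)
  then have "enn2real x \<in> nonneg_dom" unfolding nonneg_dom_def fin_dom_def by simp
  with x show ?thesis using that by metis
qed

lemma decomposition: "\<phi> \<infinity> = \<infinity> \<Longrightarrow> \<phi> = outer_enn \<circ> inner_enn"
proof
  fix x assume top: "\<phi> \<infinity> = \<infinity>"
  show "\<phi> x = (outer_enn \<circ> inner_enn) x"
  proof (cases "\<phi> x = \<infinity>")
    case True
    then show ?thesis using inner_enn_infinite outer_enn_top by simp
  next
    case False
    then obtain t0 where "t0 \<in> nonneg_dom" "x = ennreal t0" using finite_point top by blast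
    then show ?thesis
      using inner_enn_ennreal outer_enn_ennreal phi_real_enn unfolding nonneg_dom_def by simp
  qed
qed

lemma inner_enn_le: "\<phi> \<infinity> = \<infinity> \<Longrightarrow> inner_enn x \<le> \<phi> x"
proof (cases "\<phi> x = \<infinity>")
  case False
  assume "\<phi> \<infinity> = \<infinity>"
  then obtain t0 where t0: "t0 \<in> nonneg_dom" "x = ennreal t0" using finite_point False by blast
  then have "t0 \<in> fin_dom" "0 \<le> t0" unfolding nonneg_dom_def by auto
  then have "inner_fn t0 \<le> phi_real t0" using inner_le phi_real_nonneg[of 0] by force
  then show ?thesis using t0 \<open>t0 \<in> fin_dom\<close> inner_enn_ennreal phi_real_enn by (simp add: ennreal_leI)
qed simp

lemma inner_enn_mono: "mono inner_enn"
proof (rule monoI)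
  fix x y :: ennreal assume "x \<le> y"
  have "mono (\<lambda>x. SUP t\<in>nonneg_dom. affine_enn (inner_fn t - inner_deriv t * t) (inner_deriv t) x)"
    by (intro mono_SUP_family affine_enn_mono) (auto simp: nonneg_dom_def intro: inner_deriv_nonneg)
  then show "inner_enn x \<le> inner_enn y"
    unfolding inner_enn_def using top_indicator_mono[OF mono_phi] \<open>x \<le> y\<close>
    by (intro sup_mono) (auto dest: monoD)
qed

lemma inner_enn_convex: "ennconvex inner_enn"
  unfolding inner_enn_def
  by (intro ennconvex_sup ennconvex_SUP top_indicator_convex conv_phi affine_enn_convex)

lemma outer_enn_mono: "mono outer_enn"
  unfolding outer_enn_def
  by (intro mono_SUP_family affine_enn_mono) (use outer_deriv_ge_one in \<open>auto intro: order_trans[OF zero_le_one]\<close>)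

lemma outer_enn_convex: "ennconvex outer_enn"
  unfolding outer_enn_def by (intro ennconvex_SUP affine_enn_convex)

text \<open>Since rderiv is unbounded, so are inner_deriv and outer_deriv, and the supporting
  lines of inner_enn and outer_enn become arbitrarily steep: both grow superlinearly.\<close>

lemma inner_enn_superlinear:
  assumes steep: "\<And>M. \<exists>t\<in>nonneg_dom. M \<le> rderiv t"
  shows "((\<lambda>t::real. inner_enn (ennreal t) / ennreal t) \<longlongrightarrow> \<infinity>) at_top"
proof (rule superlinear_if_steep_minorants)
  fix K :: real
  obtain X where X: "\<forall>x\<ge>X. K \<le> inner_slope \<theta> x" using inner_slope_unbounded \<theta>_bounds(1) by blast
  obtain t1 where t1: "t1 \<in> nonneg_dom" "X \<le> rderiv t1" using steep by blast
  let ?c = "inner_fn t1 - inner_deriv t1 * t1"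
  show "\<exists>c k. K \<le> k \<and> (\<forall>t\<ge>0. ennreal (c + k * t) \<le> inner_enn (ennreal t))"
  proof (rule exI[of _ ?c], rule exI[of _ "inner_deriv t1"], intro conjI allI impI)
    show "K \<le> inner_deriv t1" using X t1(2) unfolding inner_deriv_def by blast
    fix t :: real assume "0 \<le> t"
    then have "ennreal (?c + inner_deriv t1 * t) = affine_enn ?c (inner_deriv t1) (ennreal t)"
      by (simp add: affine_enn_ennreal)
    also have "\<dots> \<le> inner_enn (ennreal t)"
      unfolding inner_enn_def by (rule le_supI1, rule SUP_upper[OF t1(1)])
    finally show "ennreal (?c + inner_deriv t1 * t) \<le> inner_enn (ennreal t)" .
  qed
qed

lemma outer_enn_superlinear:
  assumes steep: "\<And>M. \<exists>t\<in>nonneg_dom. M \<le> rderiv t"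
  shows "((\<lambda>t::real. outer_enn (ennreal t) / ennreal t) \<longlongrightarrow> \<infinity>) at_top"
proof (rule superlinear_if_steep_minorants)
  fix K :: real
  obtain X where X: "\<forall>x\<ge>X. K \<le> outer_slope \<theta> x" using outer_slope_unbounded \<theta>_bounds(2) by blast
  obtain t1 where t1: "t1 \<in> nonneg_dom" "X \<le> rderiv t1" using steep by blast
  let ?c = "phi_real t1 - outer_deriv t1 * inner_fn t1"
  show "\<exists>c k. K \<le> k \<and> (\<forall>t\<ge>0. ennreal (c + k * t) \<le> outer_enn (ennreal t))"
  proof (rule exI[of _ ?c], rule exI[of _ "outer_deriv t1"], intro conjI allI impI)
    show "K \<le> outer_deriv t1" using X t1(2) unfolding outer_deriv_def by blast
    fix t :: real assume "0 \<le> t"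
    then have "ennreal (?c + outer_deriv t1 * t) = affine_enn ?c (outer_deriv t1) (ennreal t)"
      by (simp add: affine_enn_ennreal)
    also have "\<dots> \<le> outer_enn (ennreal t)"
      unfolding outer_enn_def by (rule SUP_upper[OF t1(1)])
    finally show "ennreal (?c + outer_deriv t1 * t) \<le> outer_enn (ennreal t)" .
  qed
qed

text \<open>The exponent drops from
  \<alpha> to \<theta> \<alpha>' = \<alpha> because inner_deriv is (essentially) rderiv to the power \<theta>.\<close>

lemma ratio_pow_inner_enn_le:
  assumes t1: "t1 \<in> nonneg_dom" "2 \<le> rderiv t1"
    and s: "2 * t1 \<le> s" "phi_real 0 \<le> s" "0 < s"
    and exps: "0 < \<alpha>" "\<theta> * \<alpha>' = \<alpha>"
  shows "ratio_pow inner_enn \<alpha>' (2 * s) \<le> ennreal (2 powr \<alpha>' * 2 powr \<alpha>) * ratio_pow \<phi> \<alpha> s"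
proof (cases "2 * s \<in> fin_dom")
  case False
  then have "inner_enn (ennreal (2 * s)) = \<infinity>"
    by (intro inner_enn_infinite) (simp add: fin_dom_def less_top[symmetric])
  then show ?thesis by (simp add: ratio_pow_def)
next
  case True
  have t1': "t1 \<in> fin_dom" "0 \<le> t1" using t1 unfolding nonneg_dom_def by auto
  have sS: "s \<in> fin_dom" using True fin_dom_down s by simp
  have "t1 < s" using s t1' by linarith
  have "phi_real t1 + rderiv t1 * (s - t1) \<le> phi_real s" by (rule tangent_below[OF t1'(1) sS \<open>t1 < s\<close>])
  moreover have "2 * s - 2 * t1 \<le> rderiv t1 * (s - t1)"
    using mult_right_mono[OF t1(2), of "s - t1"] \<open>t1 < s\<close> by (simp add: right_diff_distrib)
  moreover have "phi_real 0 \<le> phi_real t1" using t1' mono by simp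
  ultimately have growth: "s \<le> phi_real s - phi_real 0" using s by linarith
  define \<sigma> where "\<sigma> = (phi_real s - phi_real 0) / s"
  have \<sigma>_ge: "1 \<le> \<sigma>" unfolding \<sigma>_def using growth s by simp
  have "\<sigma> \<le> rderiv s" using slope_le_rderiv[OF sS s(3)] unfolding \<sigma>_def slope_def by simp
  then have "\<sigma> powr \<theta> \<le> inner_deriv s"
    unfolding inner_deriv_def using inner_slope_mono[OF \<theta>_bounds(1), of \<sigma> "rderiv s"] \<sigma>_ge
    by (simp add: inner_slope_powr)
  then have "s * \<sigma> powr \<theta> \<le> s * inner_deriv s" using s by simp
  also have "\<dots> \<le> inner_fn (2 * s)" using inner_lower_bound[OF True] s by simp
  finally have inner_bound: "s * \<sigma> powr \<theta> \<le> inner_fn (2 * s)" .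
  have inner_pos: "0 < inner_fn (2 * s)"
    using inner_bound s \<sigma>_ge by (smt (verit) mult_pos_pos powr_gt_zero)
  have phi_pos: "0 < phi_real s" using growth s phi_real_nonneg[of 0] by linarith
  have "(2 * s / inner_fn (2 * s)) powr \<alpha>' \<le> 2 powr \<alpha>' * 2 powr \<alpha> * (s / phi_real s) powr \<alpha>"
    by (rule ratio_power_estimate[OF s(3) \<sigma>_def \<sigma>_ge inner_bound _ phi_real_nonneg \<theta>_bounds(1) exps(2,1)])
       (use growth s in simp)
  moreover have "ratio_pow inner_enn \<alpha>' (2 * s) = ennreal ((2 * s / inner_fn (2 * s)) powr \<alpha>')"
    using inner_enn_ennreal[of "2 * s"] True s inner_pos by (simp add: ratio_pow_def nonneg_dom_def)
  moreover have "ratio_pow \<phi> \<alpha> s = ennreal ((s / phi_real s) powr \<alpha>)"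
    using phi_real_enn[OF sS] phi_pos by (simp add: ratio_pow_def)
  ultimately show ?thesis by (simp add: ennreal_mult[symmetric] ennreal_leI)
qed

text \<open>Integrability of (t / inner_enn t)^\<alpha>' on a ray, by comparison with the
  integrand for \<phi> after the substitution t = 2 x.\<close>

lemma inner_enn_integrable:
  assumes t1: "t1 \<in> nonneg_dom" "2 \<le> rderiv t1"
    and exps: "0 < \<alpha>" "\<theta> * \<alpha>' = \<alpha>"
    and ts: "ennreal ts > zero_level \<phi>"
    and integ: "(\<integral>\<^sup>+ t\<in>{ts..}. ratio_pow \<phi> \<alpha> t \<partial>lborel) < \<infinity>"
  shows "\<exists>ts'::real. ennreal ts' > zero_level \<phi> \<and>
           (\<integral>\<^sup>+ t\<in>{ts'..}. ratio_pow inner_enn \<alpha>' t \<partial>lborel) < \<infinity>"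
proof (intro exI conjI)
  define T where "T = max (max (2 * t1) (phi_real 0)) (max ts 1)"
  define C where "C = 2 powr \<alpha>' * 2 powr \<alpha>"
  have T: "2 * t1 \<le> T" "phi_real 0 \<le> T" "ts \<le> T" "1 \<le> T" unfolding T_def by auto
  have "ennreal ts \<le> ennreal (2 * T)" using T by (intro ennreal_leI) auto
  then show "zero_level \<phi> < ennreal (2 * T)" using ts by (rule order.strict_trans2[rotated])
  have [measurable]: "ratio_pow \<phi> \<alpha> \<in> borel_measurable borel"
    by (intro ratio_pow_measurable borel_measurable_continuous_onI cont_phi)
  have "(\<integral>\<^sup>+ t\<in>{2 * T..}. ratio_pow inner_enn \<alpha>' t \<partial>lborel)
      \<le> (\<integral>\<^sup>+ t. ennreal C * (ratio_pow \<phi> \<alpha> (t / 2) * indicator {2 * T..} t) \<partial>lborel)"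
  proof (rule nn_integral_mono)
    fix t
    show "ratio_pow inner_enn \<alpha>' t * indicator {2 * T..} t
        \<le> ennreal C * (ratio_pow \<phi> \<alpha> (t / 2) * indicator {2 * T..} t)"
      using ratio_pow_inner_enn_le[OF t1, of "t / 2"] T exps unfolding C_def
      by (cases "2 * T \<le> t") auto
  qed
  also have "\<dots> = ennreal C * (2 * (\<integral>\<^sup>+ x\<in>{T..}. ratio_pow \<phi> \<alpha> x \<partial>lborel))"
    by (simp add: nn_integral_cmult nn_integral_ray_halve)
  also have "\<dots> \<le> ennreal C * (2 * (\<integral>\<^sup>+ x\<in>{ts..}. ratio_pow \<phi> \<alpha> x \<partial>lborel))"
    using T by (intro mult_left_mono nn_integral_mono) (auto simp: indicator_def)
  also have "\<dots> < \<infinity>" using integ by (simp add: ennreal_mult_less_top less_top)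
  finally show "(\<integral>\<^sup>+ t\<in>{2 * T..}. ratio_pow inner_enn \<alpha>' t \<partial>lborel) < \<infinity>" .
qed

end

lemma mono_finite_at_zero:
  fixes \<phi> :: "ennreal \<Rightarrow> ennreal"
  assumes "mono \<phi>" "\<exists>x y. \<phi> x \<noteq> \<phi> y"
  shows "\<phi> 0 < \<infinity>"
proof (rule ccontr)
  assume "\<not> \<phi> 0 < \<infinity>"
  then have "\<phi> 0 = \<infinity>" by (simp add: less_top[symmetric])
  then have "\<phi> x = \<infinity>" for x using monoD[OF assms(1), of 0 x] by (simp add: top_unique)
  then show False using assms(2) by simp
qed

theorem lemma2p1:
  fixes \<phi> :: "ennreal \<Rightarrow> ennreal" and \<alpha> \<alpha>' ts :: real
  assumes nonconst: "\<exists>x y. \<phi> x \<noteq> \<phi> y"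
    and cont: "continuous_on UNIV \<phi>"
    and mono: "mono \<phi>"
    and conv: "ennconvex \<phi>"
    and alpha: "\<alpha> > 0"
    and ts: "ennreal ts > zero_level \<phi>"
    and integ: "(\<integral>\<^sup>+ t\<in>{ts..}. ratio_pow \<phi> \<alpha> t \<partial>lborel) < \<infinity>"
    and alpha': "\<alpha>' > \<alpha>"
  shows "\<exists>\<psi> \<phi>'. strictly_convex_enn \<psi> \<and> strictly_convex_enn \<phi>' \<and>
           \<phi> = \<psi> \<circ> \<phi>' \<and> (\<forall>x. \<phi>' x \<le> \<phi> x) \<and>
           (\<exists>ts'::real. ennreal ts' > zero_level \<phi> \<and>
              (\<integral>\<^sup>+ t\<in>{ts'..}. ratio_pow \<phi>' \<alpha>' t \<partial>lborel) < \<infinity>)"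
proof -
  define \<theta> where "\<theta> = \<alpha> / \<alpha>'"
  have exponents: "0 < \<theta>" "\<theta> < 1" "\<theta> * \<alpha>' = \<alpha>"
    using alpha alpha' by (auto simp: \<theta>_def field_simps)
  interpret convex_enn_split \<phi> \<theta>
    using mono cont conv mono_finite_at_zero[OF mono nonconst] exponents by unfold_locales auto
  have steep: "\<And>M. \<exists>t\<in>nonneg_dom. M \<le> rderiv t"
    using rderiv_unbounded[OF alpha integ] unfolding nonneg_dom_def by blast
  obtain t1 where t1: "t1 \<in> nonneg_dom" "2 \<le> rderiv t1" using steep by blast
  have top: "\<phi> \<infinity> = \<infinity>" using phi_top[of t1] t1 unfolding nonneg_dom_def by auto
  have "strictly_convex_enn outer_enn" "strictly_convex_enn inner_enn"
    unfolding strictly_convex_enn_def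
    using outer_enn_mono outer_enn_convex outer_enn_superlinear[OF steep]
      inner_enn_mono inner_enn_convex inner_enn_superlinear[OF steep] by auto
  then show ?thesis
    using decomposition[OF top] inner_enn_le[OF top] inner_enn_integrable[OF t1 alpha exponents(3) ts integ]
    by blast
qed

end
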